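(* Let $w,z\in\mathbb{C}$ be such that neither $w$ nor $z$ is a non-positive integer and $w+z-\tfrac12\notin\mathbb{Z}$. Then the series below converges and $$\frac{1}{\sqrt{2\pi}}\,\frac{2^{w+z}\,\Gamma(w)\,\Gamma(z)}{1-\cot(\pi w)\cot(\pi z)}=\sum_{n=0}^{\infty}\frac{\Gamma\!\left(w+z-n-\tfrac12\right)}{2^n\,n!}\,\left(w-z-n+\tfrac12\right)_{2n},$$ where the factor $\dfrac{1}{1-\cot(\pi w)\cot(\pi z)}$ is to be read as $-\dfrac{\sin(\pi w)\sin(\pi z)}{\cos(\pi(w+z))}$ (the two expressions agree whenever $w,z\notin\mathbb{Z}$).
   Context: $\Gamma$ denotes Euler's gamma function. $(a)_k$ denotes the Pochhammer symbol (rising factorial): $(a)_0=1$ and $(a)_k=a(a+1)\cdots(a+k-1)$ for integers $k\ge 1$. *)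

theory Defs
  imports "HOL-Analysis.Analysis"
begin

end

theory Submission
  imports Defs "HOL-Real_Asymp.Real_Asymp"
begin

text \<open>
  With \<open>c = w + z - 1/2\<close> and \<open>a = w - z + 1/2\<close>, reflecting the Pochhammer symbols turns the
  \<open>n\<close>-th term into \<open>\<Gamma>(c)\<close> times the \<open>n\<close>-th term of \<open>\<^sub>2F\<^sub>1(a, 1 - a; 1 - c; 1/2)\<close>, so the series is
  Gauss's second summation theorem in disguise. That theorem is proved from the contiguous relation
  \<open>b(b+1) F(b) = (a+b)(1-a+b) F(b+2)\<close>, obtained by telescoping, iterated \<open>K\<close> times: as \<open>K \<rightarrow> \<infinity>\<close>
  the function \<open>F(b + 2K)\<close> tends to \<open>1\<close> and the ratio of Pochhammer symbols to a ratio of Gamma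
  values. Legendre's duplication formula and Euler's reflection formula then produce the stated
  closed form.
\<close>

definition half_hyp_term :: "complex \<Rightarrow> complex \<Rightarrow> nat \<Rightarrow> complex" where
  "half_hyp_term a b n = pochhammer a n * pochhammer (1 - a) n / (pochhammer b n * fact n * 2 ^ n)"

definition half_hyp :: "complex \<Rightarrow> complex \<Rightarrow> complex" where
  "half_hyp a b = suminf (half_hyp_term a b)"

lemma half_hyp_term_0 [simp]: "half_hyp_term a b 0 = 1"
  by (simp add: half_hyp_term_def)

lemma half_hyp_term_Suc:
  "half_hyp_term a b (Suc n) = half_hyp_term a b n *
     ((a + of_nat n) * (1 - a + of_nat n) / ((b + of_nat n) * (of_nat n + 1) * 2))"
proof -
  have "fact (Suc n) = (of_nat n + 1) * (fact n :: complex)"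
    by (simp add: add_ac)
  then show ?thesis
    unfolding half_hyp_term_def pochhammer_Suc power_Suc
    by (simp only: divide_inverse inverse_mult_distrib mult_ac add_diff_eq)
qed

lemma tendsto_add_of_nat_ratio:
  "(\<lambda>n. (p + of_nat n) / (q + of_nat n :: 'a :: real_normed_field)) \<longlonglongrightarrow> 1"
proof -
  have "(\<lambda>n. (p / of_nat n + 1) / (q / of_nat n + 1)) \<longlonglongrightarrow> (0 + 1) / (0 + 1 :: 'a)"
    by (intro tendsto_intros lim_const_over_n) simp
  moreover have "eventually (\<lambda>n. (p / of_nat n + 1) / (q / of_nat n + 1) = (p + of_nat n) / (q + of_nat n)) sequentially"
    using eventually_gt_at_top[of 0]
  proof eventually_elim
    case (elim n)
    then have n: "of_nat n \<noteq> (0::'a)"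
      by simp
    then have "p / of_nat n + 1 = (p + of_nat n) / of_nat n" "q / of_nat n + 1 = (q + of_nat n) / of_nat n"
      by (simp_all add: field_simps)
    with n show ?case
      by (simp add: divide_divide_times_eq mult.commute[of _ "of_nat n"])
  qed
  ultimately show ?thesis
    by (simp add: tendsto_cong)
qed

lemma half_hyp_term_ratio_tendsto:
  fixes a b :: complex
  shows "(\<lambda>n. (a + of_nat n) * (1 - a + of_nat n) / ((b + of_nat n) * (of_nat n + 1) * 2)) \<longlonglongrightarrow> 1/2"
proof -
  have "(\<lambda>n. (a + of_nat n) / (1 + of_nat n) * ((1 - a + of_nat n) / (b + of_nat n)) / 2) \<longlonglongrightarrow> 1 * 1 / 2"
    by (intro tendsto_intros tendsto_add_of_nat_ratio) simp
  then show ?thesis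
    by (simp only: divide_inverse inverse_mult_distrib mult_ac add.commute[of 1] mult_1)
qed

lemma summable_norm_of_ratio_tendsto:
  fixes f r :: "nat \<Rightarrow> 'a :: real_normed_field"
  assumes "\<And>n. f (Suc n) = f n * r n" and "r \<longlonglongrightarrow> l" and "norm l < 1"
  shows "summable (\<lambda>n. norm (f n))"
proof -
  obtain q where q: "norm l < q" "q < 1"
    using assms(3) dense by blast
  have "(\<lambda>n. norm (r n)) \<longlonglongrightarrow> norm l"
    by (intro tendsto_intros assms(2))
  then have "eventually (\<lambda>n. norm (r n) < q) sequentially"
    using q(1) by (rule order_tendstoD)
  then obtain N where N: "\<And>n. n \<ge> N \<Longrightarrow> norm (r n) < q"
    by (auto simp: eventually_at_top_linorder)
  show ?thesis
  proof (rule summable_ratio_test[of q N])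
    fix n assume "n \<ge> N"
    then have "norm (f n) * norm (r n) \<le> norm (f n) * q"
      using N by (intro mult_left_mono) (auto simp: less_imp_le)
    then show "norm (norm (f (Suc n))) \<le> q * norm (norm (f n))"
      by (simp add: assms(1) norm_mult mult_ac)
  qed (use q in simp)
qed

lemma summable_norm_half_hyp_term: "summable (\<lambda>n. norm (half_hyp_term a b n))"
  by (rule summable_norm_of_ratio_tendsto[OF half_hyp_term_Suc half_hyp_term_ratio_tendsto]) simp

lemma summable_half_hyp_term: "summable (half_hyp_term a b)"
  by (rule summable_norm_cancel[OF summable_norm_half_hyp_term])

lemma add_of_nat_neq_0: "b \<notin> \<int>\<^sub>\<le>\<^sub>0 \<Longrightarrow> b + of_nat n \<noteq> (0::complex)"
  using plus_of_nat_eq_0_imp by blast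

lemma half_hyp_term_add_2:
  assumes b: "b \<notin> \<int>\<^sub>\<le>\<^sub>0"
  shows "half_hyp_term a (b + 2) n =
           half_hyp_term a b n * (b * (b + 1) / ((b + of_nat n) * (b + of_nat n + 1)))"
proof -
  have nz: "pochhammer b n \<noteq> 0" "b \<noteq> 0" "b + 1 \<noteq> 0"
    using b add_of_nat_neq_0[OF b, of 0] add_of_nat_neq_0[OF b, of 1]
    by (auto simp: pochhammer_eq_0_iff)
  have "b * (b + 1) * pochhammer (b + 2) n = pochhammer b (n + 2)"
    using pochhammer_product'[of b 2 n] by (simp add: numeral_2_eq_2 pochhammer_Suc algebra_simps)
  also have "\<dots> = pochhammer b n * ((b + of_nat n) * (b + of_nat n + 1))"
    by (simp add: numeral_2_eq_2 pochhammer_Suc algebra_simps)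
  finally have "pochhammer (b + 2) n = pochhammer b n * ((b + of_nat n) * (b + of_nat n + 1)) / (b * (b + 1))"
    using nz by (simp add: eq_divide_eq mult_ac)
  then show ?thesis
    unfolding half_hyp_term_def
    by (simp only: divide_inverse inverse_mult_distrib mult_ac inverse_inverse_eq)
qed

lemma half_hyp_term_telescoping:
  assumes b: "b \<notin> \<int>\<^sub>\<le>\<^sub>0"
  shows "2 * (of_nat n / (b + of_nat n)) * half_hyp_term a b n
           - 2 * (of_nat (Suc n) / (b + of_nat (Suc n))) * half_hyp_term a b (Suc n)
         = half_hyp_term a b n - (a + b) * (1 - a + b) / (b * (b + 1)) * half_hyp_term a (b + 2) n"
proof -
  have "of_nat n + 1 \<noteq> (0::complex)"
    by (metis of_nat_Suc of_nat_neq_0 add.commute)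
  moreover have "b + of_nat n \<noteq> 0" "b + of_nat n + 1 \<noteq> 0" "b \<noteq> 0" "b + 1 \<noteq> 0"
    using add_of_nat_neq_0[OF b, of n] add_of_nat_neq_0[OF b, of "Suc n"]
      add_of_nat_neq_0[OF b, of 0] add_of_nat_neq_0[OF b, of 1]
    by (auto simp: add_ac)
  ultimately have "(b + of_nat n) * inverse (b + of_nat n) = 1" "(b + of_nat n + 1) * inverse (b + of_nat n + 1) = 1"
    "b * inverse b = 1" "(b + 1) * inverse (b + 1) = 1" "(of_nat n + 1 :: complex) * inverse (of_nat n + 1) = 1"
    "2 * inverse 2 = (1::complex)"
    by simp_all
  then show ?thesis
    unfolding half_hyp_term_Suc half_hyp_term_add_2[OF b] of_nat_Suc divide_inverse inverse_mult_distrib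
    by algebra
qed

lemma half_hyp_contiguous:
  assumes b: "b \<notin> \<int>\<^sub>\<le>\<^sub>0"
  shows "b * (b + 1) * half_hyp a b = (a + b) * (1 - a + b) * half_hyp a (b + 2)"
proof -
  define G where "G n = 2 * (of_nat n / (b + of_nat n)) * half_hyp_term a b n" for n
  define \<rho> where "\<rho> = (a + b) * (1 - a + b) / (b * (b + 1))"
  have "G \<longlonglongrightarrow> 2 * 1 * 0"
    unfolding G_def using tendsto_add_of_nat_ratio[of 0 b]
    by (intro tendsto_intros summable_LIMSEQ_zero summable_half_hyp_term) simp_all
  then have "(\<lambda>n. G n - G (Suc n)) sums (G 0 - 0)"
    by (intro telescope_sums') simp
  then have "(\<lambda>n. half_hyp_term a b n - \<rho> * half_hyp_term a (b + 2) n) sums 0"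
    unfolding G_def half_hyp_term_telescoping[OF b] \<rho>_def by simp
  moreover have "(\<lambda>n. half_hyp_term a b n - \<rho> * half_hyp_term a (b + 2) n) sums (half_hyp a b - \<rho> * half_hyp a (b + 2))"
    unfolding half_hyp_def by (intro sums_diff sums_mult summable_sums summable_half_hyp_term)
  ultimately have "half_hyp a b = \<rho> * half_hyp a (b + 2)"
    by (simp add: sums_iff)
  moreover have "b * (b + 1) \<noteq> 0"
    using add_of_nat_neq_0[OF b, of 0] add_of_nat_neq_0[OF b, of 1] by simp
  ultimately show ?thesis
    by (simp add: \<rho>_def)
qed

lemma half_hyp_iterate:
  assumes b: "b \<notin> \<int>\<^sub>\<le>\<^sub>0"
  shows "pochhammer (b/2) K * pochhammer ((b + 1)/2) K * half_hyp a b =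
         pochhammer ((a + b)/2) K * pochhammer ((1 - a + b)/2) K * half_hyp a (b + 2 * of_nat K)"
proof (induction K)
  case 0
  then show ?case by simp
next
  case (Suc K)
  define b' where "b' = b + 2 * of_nat K"
  have "b' \<notin> \<int>\<^sub>\<le>\<^sub>0"
  proof
    assume "b' \<in> \<int>\<^sub>\<le>\<^sub>0"
    then have "b' - of_nat (2 * K) \<in> \<int>\<^sub>\<le>\<^sub>0"
      by (rule nonpos_Ints_diff_Nats) simp
    then show False
      using b by (simp add: b'_def)
  qed
  then have contiguous: "b' * (b' + 1) * half_hyp a b' = (a + b') * (1 - a + b') * half_hyp a (b' + 2)"
    by (rule half_hyp_contiguous)
  have "4 * (pochhammer (b/2) (Suc K) * pochhammer ((b + 1)/2) (Suc K) * half_hyp a b)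
      = b' * (b' + 1) * (pochhammer (b/2) K * pochhammer ((b + 1)/2) K * half_hyp a b)"
    by (simp add: pochhammer_Suc b'_def field_simps)
  also have "\<dots> = pochhammer ((a + b)/2) K * pochhammer ((1 - a + b)/2) K * (b' * (b' + 1) * half_hyp a b')"
    by (simp add: Suc.IH b'_def)
  also have "\<dots> = 4 * (pochhammer ((a + b)/2) (Suc K) * pochhammer ((1 - a + b)/2) (Suc K)
                        * half_hyp a (b + 2 * of_nat (Suc K)))"
    unfolding contiguous by (simp add: pochhammer_Suc b'_def field_simps)
  finally show ?case
    by simp
qed

lemma norm_pochhammer_Suc_ge:
  assumes "Re c \<ge> 1"
  shows "Re c * fact (Suc n) \<le> norm (pochhammer c (Suc n))"
proof (induction n)
  case 0
  then show ?case
    using complex_Re_le_cmod[of c] by simp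
next
  case (Suc n)
  have "of_nat (Suc (Suc n)) \<le> Re (c + of_nat (Suc n))"
    using assms by simp
  also have "\<dots> \<le> norm (c + of_nat (Suc n))"
    by (rule complex_Re_le_cmod)
  finally have step: "of_nat (Suc (Suc n)) \<le> norm (c + of_nat (Suc n))" .
  have "Re c * fact (Suc (Suc n)) = Re c * fact (Suc n) * of_nat (Suc (Suc n))"
    by (simp add: fact_Suc[of "Suc n"] mult_ac)
  also have "\<dots> \<le> norm (pochhammer c (Suc n)) * norm (c + of_nat (Suc n))"
    using Suc.IH step assms by (intro mult_mono) auto
  also have "\<dots> = norm (pochhammer c (Suc (Suc n)))"
    by (simp add: pochhammer_Suc[of c "Suc n"] norm_mult)
  finally show ?case .
qed

lemma norm_half_hyp_term_Suc_le:
  assumes c: "Re c \<ge> 1"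
  shows "norm (half_hyp_term a c (Suc n)) \<le> norm (half_hyp_term a 1 (Suc n)) / Re c"
proof -
  define A where "A = norm (pochhammer a (Suc n) * pochhammer (1 - a) (Suc n))"
  define D where "D = fact (Suc n) * (2::real) ^ Suc n"
  have "norm (half_hyp_term a 1 (Suc n)) / Re c = A / (Re c * fact (Suc n) * D)"
    unfolding half_hyp_term_def A_def D_def
    by (simp add: norm_mult norm_divide norm_power pochhammer_fact[symmetric] mult_ac
        del: pochhammer_Suc fact_Suc power_Suc)
  moreover have "norm (half_hyp_term a c (Suc n)) = A / (norm (pochhammer c (Suc n)) * D)"
    unfolding half_hyp_term_def A_def D_def
    by (simp add: norm_mult norm_divide norm_power mult_ac del: pochhammer_Suc fact_Suc power_Suc)
  moreover have "Re c * fact (Suc n) * D \<le> norm (pochhammer c (Suc n)) * D"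
    using norm_pochhammer_Suc_ge[OF c] by (intro mult_right_mono) (auto simp: D_def)
  moreover have "0 < Re c * fact (Suc n) * D"
    using c by (simp add: D_def)
  ultimately show ?thesis
    by (simp add: A_def divide_left_mono)
qed

lemma half_hyp_tendsto_1: "(\<lambda>K. half_hyp a (b + 2 * of_nat K)) \<longlonglongrightarrow> 1"
proof -
  define g where "g n = norm (half_hyp_term a 1 (Suc n))" for n
  have g: "summable g"
    unfolding g_def using summable_norm_half_hyp_term[of a 1] by (subst summable_Suc_iff)
  have "eventually (\<lambda>K. 1 \<le> Re b + 2 * real K) at_top"
    by real_asymp
  define C where "C = suminf g"
  from \<open>eventually _ at_top\<close>
  have "eventually (\<lambda>K. norm (half_hyp a (b + 2 * of_nat K) - 1) \<le> C / (Re b + 2 * real K)) at_top"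
  proof eventually_elim
    case (elim K)
    define c where "c = b + 2 * of_nat K"
    have c: "Re c \<ge> 1" "Re c = Re b + 2 * real K"
      using elim by (simp_all add: c_def)
    have "half_hyp a c - 1 = (\<Sum>n. half_hyp_term a c (Suc n))"
      unfolding half_hyp_def using suminf_split_head[OF summable_half_hyp_term] by simp
    also have "norm \<dots> \<le> (\<Sum>n. g n / Re c)"
        by (rule norm_suminf_le[OF _ summable_divide[OF g]]) (simp add: g_def norm_half_hyp_term_Suc_le[OF c(1)])
    also have "\<dots> = C / Re c"
      unfolding C_def using g by (rule suminf_divide)
    finally show ?case
      by (simp add: c_def c(2))
  qed
  moreover have "(\<lambda>K. C / (Re b + 2 * real K)) \<longlonglongrightarrow> 0"
    by real_asymp
  ultimately have "(\<lambda>K. half_hyp a (b + 2 * of_nat K) - 1) \<longlonglongrightarrow> 0"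
    by (rule Lim_null_comparison)
  then show ?thesis
    by (rule LIM_zero_cancel)
qed

lemma pochhammer_ratio_tendsto_Gamma:
  fixes \<alpha> \<beta> \<gamma> \<delta> :: complex
  assumes "\<alpha> + \<beta> = \<gamma> + \<delta>"
  shows "(\<lambda>K. pochhammer \<alpha> K * pochhammer \<beta> K / (pochhammer \<gamma> K * pochhammer \<delta> K))
           \<longlonglongrightarrow> rGamma \<alpha> * rGamma \<beta> * Gamma \<gamma> * Gamma \<delta>"
proof -
  have "rGamma_series \<alpha> K * rGamma_series \<beta> K * Gamma_series \<gamma> K * Gamma_series \<delta> K
      = pochhammer \<alpha> (Suc K) * pochhammer \<beta> (Suc K) / (pochhammer \<gamma> (Suc K) * pochhammer \<delta> (Suc K))" for K
  proof -
    define E where "E x = fact K * exp (x * of_real (ln (of_nat K)))" for x :: complex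
    have "E \<gamma> * E \<delta> = fact K * fact K * exp ((\<gamma> + \<delta>) * of_real (ln (of_nat K)))"
      unfolding E_def by (simp add: exp_add distrib_right mult_ac)
    also have "\<dots> = E \<alpha> * E \<beta>"
      unfolding assms[symmetric] E_def by (simp add: exp_add distrib_right mult_ac)
    finally have "E \<gamma> * E \<delta> = E \<alpha> * E \<beta>" .
    moreover have "E \<alpha> * E \<beta> \<noteq> 0"
      by (simp add: E_def)
    ultimately have "E \<gamma> * E \<delta> / (E \<alpha> * E \<beta>) = 1"
      by simp
    moreover have "rGamma_series \<alpha> K * rGamma_series \<beta> K * Gamma_series \<gamma> K * Gamma_series \<delta> K
        = pochhammer \<alpha> (Suc K) * pochhammer \<beta> (Suc K) / (pochhammer \<gamma> (Suc K) * pochhammer \<delta> (Suc K))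
          * (E \<gamma> * E \<delta> / (E \<alpha> * E \<beta>))"
      unfolding rGamma_series_def Gamma_series_def E_def Suc_eq_plus1
      by (simp only: times_divide_times_eq mult_ac)
    ultimately show ?thesis
      by simp
  qed
  moreover have "(\<lambda>K. rGamma_series \<alpha> K * rGamma_series \<beta> K * Gamma_series \<gamma> K * Gamma_series \<delta> K)
      \<longlonglongrightarrow> rGamma \<alpha> * rGamma \<beta> * Gamma \<gamma> * Gamma \<delta>"
    by (intro tendsto_intros)
  ultimately have "(\<lambda>K. pochhammer \<alpha> (Suc K) * pochhammer \<beta> (Suc K) / (pochhammer \<gamma> (Suc K) * pochhammer \<delta> (Suc K)))
      \<longlonglongrightarrow> rGamma \<alpha> * rGamma \<beta> * Gamma \<gamma> * Gamma \<delta>"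
    by (simp only:)
  then show ?thesis
    by (rule LIMSEQ_imp_Suc)
qed

theorem gauss_second_summation:
  assumes b: "b \<notin> \<int>"
  shows "half_hyp a b = Gamma (b/2) * Gamma ((b + 1)/2) * rGamma ((a + b)/2) * rGamma ((1 - a + b)/2)"
proof -
  have b0: "b \<notin> \<int>\<^sub>\<le>\<^sub>0"
    using b nonpos_Ints_subset_Ints by blast
  have half: "(b + of_int k)/2 \<notin> \<int>\<^sub>\<le>\<^sub>0" for k
  proof
    assume "(b + of_int k)/2 \<in> \<int>\<^sub>\<le>\<^sub>0"
    then have "(b + of_int k)/2 \<in> \<int>"
      using nonpos_Ints_subset_Ints by blast
    then have "2 * ((b + of_int k)/2) - of_int k \<in> \<int>"
      by (intro Ints_diff Ints_mult) auto
    moreover have "2 * ((b + of_int k)/2) - of_int k = b"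
      by (simp add: field_simps)
    ultimately show False
      using b by (simp only:)
  qed
  define R where "R K = pochhammer ((a + b)/2) K * pochhammer ((1 - a + b)/2) K
                          / (pochhammer (b/2) K * pochhammer ((b + 1)/2) K)" for K
  have "pochhammer (b/2) K * pochhammer ((b + 1)/2) K \<noteq> 0" for K
    using half[of 0] half[of 1] by (auto dest: pochhammer_eq_0_imp_nonpos_Int)
  then have iterate: "R K * half_hyp a (b + 2 * of_nat K) = half_hyp a b" for K
    using half_hyp_iterate[OF b0, of K a] by (simp add: R_def field_simps)
  have "(\<lambda>K. R K * half_hyp a (b + 2 * of_nat K))
      \<longlonglongrightarrow> rGamma ((a + b)/2) * rGamma ((1 - a + b)/2) * Gamma (b/2) * Gamma ((b + 1)/2) * 1"
    unfolding R_def
    by (intro tendsto_intros pochhammer_ratio_tendsto_Gamma half_hyp_tendsto_1) (simp add: field_simps)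
  then show ?thesis
    unfolding iterate by (simp add: LIMSEQ_const_iff mult_ac)
qed

lemma Gamma_legendre_duplication_powr:
  fixes b :: complex
  assumes b: "b \<notin> \<int>"
  shows "Gamma (b/2) * Gamma ((b + 1)/2) = 2 powr (1 - b) * of_real (sqrt pi) * Gamma b"
proof -
  have half: "b/2 \<notin> \<int>\<^sub>\<le>\<^sub>0" "b/2 + 1/2 \<notin> \<int>\<^sub>\<le>\<^sub>0"
  proof -
    have "2 * (b/2) = b" "2 * (b/2 + 1/2) - 1 = b"
      by (simp_all add: field_simps)
    then have "b/2 \<notin> \<int>" "b/2 + 1/2 \<notin> \<int>"
      using b by (metis Ints_mult Ints_diff Ints_1 Ints_numeral)+
    then show "b/2 \<notin> \<int>\<^sub>\<le>\<^sub>0" "b/2 + 1/2 \<notin> \<int>\<^sub>\<le>\<^sub>0"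
      using nonpos_Ints_subset_Ints by blast+
  qed
  have "ln (2::complex) = of_real (ln 2)"
    using Ln_of_real[of 2] by simp
  then have "(2::complex) powr (1 - b) = exp ((1 - b) * of_real (ln 2))"
    by (simp add: powr_def)
  then show ?thesis
    using Gamma_legendre_duplication[OF half] by (simp add: add_divide_distrib)
qed

lemma rGamma_one_minus_complex:
  fixes x :: complex
  assumes "x \<notin> \<int>\<^sub>\<le>\<^sub>0"
  shows "rGamma (1 - x) = sin (of_real pi * x) * Gamma x / of_real pi"
proof -
  have "Gamma x * rGamma x = 1"
    using assms by (simp add: Gamma_def rGamma_eq_zero_iff)
  then have "rGamma (1 - x) = Gamma x * (rGamma x * rGamma (1 - x))"
    by (simp add: mult.assoc[symmetric])
  then show ?thesis
    by (simp add: rGamma_reflection_complex)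
qed

lemma Gamma_pochhammer_eq_half_hyp_term:
  fixes a c :: complex
  assumes c: "c \<notin> \<int>"
  shows "Gamma (c - of_nat n) / (2 ^ n * of_nat (fact n)) * pochhammer (a - of_nat n) (2 * n)
           = Gamma c * half_hyp_term a (1 - c) n"
proof -
  have cn: "c - of_nat n \<notin> \<int>\<^sub>\<le>\<^sub>0"
  proof
    assume "c - of_nat n \<in> \<int>\<^sub>\<le>\<^sub>0"
    then have "c - of_nat n + of_nat n \<in> \<int>"
      using nonpos_Ints_subset_Ints by auto
    then show False
      using c by simp
  qed
  have "Gamma c = pochhammer (c - of_nat n) n * Gamma (c - of_nat n)"
    using pochhammer_Gamma[OF cn, of n] Gamma_nonzero[OF cn] by (simp add: field_simps)
  moreover have "pochhammer (c - of_nat n) n = (-1) ^ n * pochhammer (1 - c) n"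
    using pochhammer_minus[of "of_nat n - c" n] by (simp add: algebra_simps)
  moreover have "pochhammer (a - of_nat n) (2 * n) = (-1) ^ n * pochhammer (1 - a) n * pochhammer a n"
    unfolding mult_2 using pochhammer_product'[of "a - of_nat n" n n] pochhammer_minus[of "of_nat n - a" n]
    by (simp add: mult_ac)
  moreover have "pochhammer (c - of_nat n) n \<noteq> 0"
    using cn by (auto dest: pochhammer_eq_0_imp_nonpos_Int)
  ultimately show ?thesis
    unfolding half_hyp_term_def by (simp add: field_simps power_mult_distrib[symmetric])
qed

lemma Gamma_mult_half_hyp:
  fixes a c :: complex
  assumes c: "c \<notin> \<int>"
  shows "Gamma c * half_hyp a (1 - c) = 2 powr c * of_real (sqrt pi) * (of_real pi / sin (of_real pi * c))
           * rGamma ((1 + a - c)/2) * rGamma ((2 - a - c)/2)"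
proof -
  have c': "1 - c \<notin> \<int>"
    using c by (auto dest: Ints_diff[OF Ints_1])
  have args: "(a + (1 - c))/2 = (1 + a - c)/2" "(1 - a + (1 - c))/2 = (2 - a - c)/2"
    by (simp_all add: algebra_simps)
  have "half_hyp a (1 - c) = 2 powr c * of_real (sqrt pi) * Gamma (1 - c)
               * rGamma ((1 + a - c)/2) * rGamma ((2 - a - c)/2)"
    using gauss_second_summation[OF c', of a] Gamma_legendre_duplication_powr[OF c']
    unfolding args by simp
  then have "Gamma c * half_hyp a (1 - c) = 2 powr c * of_real (sqrt pi) * (Gamma c * Gamma (1 - c))
               * rGamma ((1 + a - c)/2) * rGamma ((2 - a - c)/2)"
    by (simp add: mult_ac)
  then show ?thesis
    unfolding Gamma_reflection_complex .
qed

lemma duplication_reflection_closed_form: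
  fixes w z :: complex
  assumes "w \<notin> \<int>\<^sub>\<le>\<^sub>0" and "z \<notin> \<int>\<^sub>\<le>\<^sub>0"
  shows "2 powr (w + z - 1/2) * of_real (sqrt pi) * (of_real pi / sin (of_real pi * (w + z - 1/2)))
           * rGamma (1 - z) * rGamma (1 - w)
         = 1 / of_real (sqrt (2 * pi)) * (2 powr (w + z) * Gamma w * Gamma z)
             * (- (sin (of_real pi * w) * sin (of_real pi * z)) / cos (of_real pi * (w + z)))"
proof -
  have powr: "(2::complex) powr (w + z - 1/2) = 2 powr (w + z) / of_real (sqrt 2)"
    unfolding powr_diff
    by (metis of_real_numeral powr_half_sqrt powr_of_real of_real_divide of_real_1 zero_le_numeral)
  have sin: "sin (of_real pi * (w + z - 1/2)) = - cos (of_real pi * (w + z))"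
    by (simp add: right_diff_distrib sin_diff)
  have sqrt: "of_real (sqrt (2 * pi)) = of_real (sqrt 2) * (of_real (sqrt pi) :: complex)"
    by (simp add: real_sqrt_mult)
  have "of_real pi * inverse (of_real pi :: complex) = 1"
    "of_real (sqrt 2) * inverse (of_real (sqrt 2) :: complex) = 1"
    "of_real (sqrt pi) * inverse (of_real (sqrt pi) :: complex) = 1"
    "of_real (sqrt pi) * of_real (sqrt pi) = (of_real pi :: complex)"
    by (simp_all flip: of_real_mult)
  then show ?thesis
    unfolding rGamma_one_minus_complex[OF assms(1)] rGamma_one_minus_complex[OF assms(2)] powr sin sqrt
    unfolding divide_inverse inverse_mult_distrib inverse_minus_eq
    by algebra
qed

theorem mainTheorem2:
  fixes w z :: complex
  assumes "w \<notin> \<int>\<^sub>\<le>\<^sub>0" and "z \<notin> \<int>\<^sub>\<le>\<^sub>0"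
    and "w + z - 1/2 \<notin> \<int>"
  shows "(\<lambda>n::nat. Gamma (w + z - of_nat n - 1/2) / (2 ^ n * of_nat (fact n))
              * pochhammer (w - z - of_nat n + 1/2) (2 * n))
         sums (1 / of_real (sqrt (2 * pi)) * ((2::complex) powr (w + z) * Gamma w * Gamma z)
               * (- (sin (of_real pi * w) * sin (of_real pi * z)) / cos (of_real pi * (w + z))))"
proof -
  define c where "c = w + z - 1/2"
  define a where "a = w - z + 1/2"
  have shift: "w + z - of_nat n - 1/2 = c - of_nat n" "w - z - of_nat n + 1/2 = a - of_nat n" for n :: nat
    by (simp_all add: a_def c_def)
  have args: "(1 + a - c)/2 = 1 - z" "(2 - a - c)/2 = 1 - w"
    by (simp_all add: a_def c_def field_simps)
  have c: "c \<notin> \<int>"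
    using assms(3) by (simp add: c_def)
  have closed_form: "Gamma c * half_hyp a (1 - c) = 1 / of_real (sqrt (2 * pi))
      * ((2::complex) powr (w + z) * Gamma w * Gamma z)
      * (- (sin (of_real pi * w) * sin (of_real pi * z)) / cos (of_real pi * (w + z)))"
    using Gamma_mult_half_hyp[OF c, of a] duplication_reflection_closed_form[OF assms(1,2), folded c_def]
    unfolding args by (rule trans)
  show ?thesis
    unfolding shift closed_form[symmetric] Gamma_pochhammer_eq_half_hyp_term[OF c] half_hyp_def
    by (intro sums_mult summable_sums summable_half_hyp_term)
qed

end
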